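(* Let $\mathcal{A}$ be a finite alphabet and $k\ge 2$. Any strongly $k$-product-free subset $S$ of the free semigroup over $\mathcal{A}$ has upper asymptotic density at most $1/k$.
   Context: A subset $S$ of a semigroup is $\ell$-product-free ($\ell\ge2$) if there are no $x_1,\dots,x_\ell,y\in S$ (not necessarily distinct) with $x_1\cdots x_\ell=y$; it is strongly $k$-product-free if it is $\ell$-product-free for every $2\le\ell\le k$. The free semigroup over $\mathcal{A}$ consists of nonempty finite words over $\mathcal{A}$ with concatenation. It carries the measure $\mu$ assigning weight $|\mathcal{A}|^{-n}$ to every word of length $n$ (so each length layer has total weight one), and the upper asymptotic density of a set $A$ is $\limsup_{n\to\infty}\mu(A_{\le n})/\mu(\text{all words of length}\le n)$, where $A_{\le n}$ is the set of words of $A$ of length at most $n$. *)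

theory Defs
  imports "HOL-Analysis.Analysis"
begin

definition free_semigroup :: "'a list set" where
  "free_semigroup = {w. w \<noteq> []}"

definition product_free :: "nat \<Rightarrow> 'a list set \<Rightarrow> bool" where
  "product_free l S \<longleftrightarrow>
     \<not> (\<exists>xs y. length xs = l \<and> set xs \<subseteq> S \<and> y \<in> S \<and> concat xs = y)"

definition strongly_product_free :: "nat \<Rightarrow> 'a list set \<Rightarrow> bool" where
  "strongly_product_free k S \<longleftrightarrow> (\<forall>l. 2 \<le> l \<and> l \<le> k \<longrightarrow> product_free l S)"

definition mu_upto :: "'a::finite list set \<Rightarrow> nat \<Rightarrow> real" where
  "mu_upto A n = (\<Sum>w\<in>{w \<in> A \<inter> (free_semigroup :: 'a list set). length w \<le> n}.
                    (1 / real CARD('a)) ^ length w)"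

definition upper_density :: "'a::finite list set \<Rightarrow> ereal" where
  "upper_density A = limsup (\<lambda>n. ereal (mu_upto A n / mu_upto (free_semigroup :: 'a list set) n))"

end

theory Submission
  imports Defs "HOL-Library.Diagonal_Subsequence"
begin

(* Let ext_density S m x be the proportion of words v of length m with x v in S, and average
   it over m = 1..n; at the empty word this average is the density ratio up to n. On the tree
   of words the averages are harmonic up to an error 1/n, so along a subsequence realising
   the upper density a diagonal argument yields a pointwise limit D which is a bounded
   harmonic function with D [] equal to the upper density.
   For x_1, ..., x_(k-1) in S and any word z, strong k-product-freeness makes the extension
   sets of the k words x_(j+1) ... x_(k-1) z pairwise disjoint, so these k values of D sum to
   at most 1. Conversely, if M = sup D > 0, harmonicity and a Markov argument find words c in
   S with D c arbitrarily close to M, and M - D (c z) <= |A|^|z| (M - D c). Prepending such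
   words one at a time builds a chain on which all k values exceed M - e, hence k M <= 1. *)

definition ext_card :: "'a list set \<Rightarrow> nat \<Rightarrow> 'a list \<Rightarrow> nat" where
  "ext_card S m x = card {v. length v = m \<and> x @ v \<in> S}"

definition ext_density :: "'a::finite list set \<Rightarrow> nat \<Rightarrow> 'a list \<Rightarrow> real" where
  "ext_density S m x = real (ext_card S m x) / real CARD('a) ^ m"

definition mean_ext_density :: "'a::finite list set \<Rightarrow> nat \<Rightarrow> 'a list \<Rightarrow> real" where
  "mean_ext_density S n x = (\<Sum>m<n. ext_density S (Suc m) x) / real n"

definition child_mean :: "('a::finite list \<Rightarrow> real) \<Rightarrow> 'a list \<Rightarrow> real" where
  "child_mean f x = (\<Sum>b\<in>UNIV. f (x @ [b])) / real CARD('a)"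

lemma finite_words_length: "finite {v::'a::finite list. length v = m}"
  using finite_lists_length_eq[of "UNIV::'a set" m] by simp

lemma card_words_length: "card {v::'a::finite list. length v = m} = CARD('a) ^ m"
  using card_lists_length_eq[of "UNIV::'a set" m] by simp

lemma ext_card_le: "ext_card S m (x::'a::finite list) \<le> CARD('a) ^ m"
  unfolding ext_card_def card_words_length[symmetric]
  by (rule card_mono[OF finite_words_length]) auto

lemma ext_card_Suc: "ext_card S (Suc m) (x::'a::finite list) = (\<Sum>b\<in>UNIV. ext_card S m (x @ [b]))"
proof -
  have "{v. length v = Suc m \<and> x @ v \<in> S} =
      (\<lambda>(b, v). b # v) ` (SIGMA b:UNIV. {v. length v = m \<and> (x @ [b]) @ v \<in> S})"
    by (auto simp: length_Suc_conv)
  moreover have "inj (\<lambda>(b::'a, v). b # v)"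
    by (auto simp: inj_def)
  moreover have "finite {v. length v = m \<and> P v}" for P :: "'a list \<Rightarrow> bool"
    by (rule finite_subset[OF _ finite_words_length[of m]]) auto
  ultimately show ?thesis
    unfolding ext_card_def by (simp add: card_image inj_on_subset)
qed

lemma ext_density_nonneg: "0 \<le> ext_density S m x"
  by (simp add: ext_density_def)

lemma ext_density_le_1: "ext_density S m (x::'a::finite list) \<le> 1"
  using ext_card_le[of S m x] by (simp add: ext_density_def divide_le_eq_1 flip: of_nat_power)

lemma ext_density_Suc: "ext_density S (Suc m) x = child_mean (ext_density S m) x"
  unfolding ext_density_def child_mean_def ext_card_Suc
  by (simp add: sum_divide_distrib field_simps)

lemma mean_ext_density_nonneg: "0 \<le> mean_ext_density S n x"
  unfolding mean_ext_density_def by (intro divide_nonneg_nonneg sum_nonneg ext_density_nonneg) simp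

lemma mean_ext_density_le_1: "mean_ext_density S n (x::'a::finite list) \<le> 1"
proof -
  have "(\<Sum>m<n. ext_density S (Suc m) x) \<le> (\<Sum>m<n. 1)"
    by (intro sum_mono ext_density_le_1)
  then show ?thesis
    unfolding mean_ext_density_def by (cases "n = 0") (simp_all add: divide_le_eq_1)
qed

lemma mean_ext_density_almost_harmonic:
  "\<bar>mean_ext_density S n x - child_mean (mean_ext_density S n) x\<bar> \<le> 1 / real n"
proof -
  let ?q = "real CARD('a)" and ?e = "\<lambda>m b. ext_density S m (x @ [b])"
  have mean_x: "mean_ext_density S n x = (\<Sum>b\<in>UNIV. \<Sum>m<n. ?e m b) / ?q / real n"
    unfolding mean_ext_density_def ext_density_Suc child_mean_def
    by (simp add: sum_divide_distrib[symmetric] sum.swap[of _ "{..<n}"])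
  have mean_children: "child_mean (mean_ext_density S n) x = (\<Sum>b\<in>UNIV. \<Sum>m<n. ?e (Suc m) b) / ?q / real n"
    unfolding mean_ext_density_def child_mean_def
    by (simp add: sum_divide_distrib[symmetric])
  have "(\<Sum>b\<in>UNIV. \<Sum>m<n. ?e m b) - (\<Sum>b\<in>UNIV. \<Sum>m<n. ?e (Suc m) b)
      = (\<Sum>b\<in>UNIV. \<Sum>m<n. ?e m b - ?e (Suc m) b)"
    by (simp add: sum_subtractf)
  also have "\<dots> = (\<Sum>b\<in>UNIV. ?e 0 b - ?e n b)"
    by (intro sum.cong refl sum_lessThan_telescope')
  also have "\<bar>\<dots>\<bar> \<le> (\<Sum>b\<in>UNIV. \<bar>?e 0 b - ?e n b\<bar>)"
    by (rule sum_abs)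
  also have "\<dots> \<le> (\<Sum>b\<in>(UNIV::'a set). 1)"
    by (intro sum_mono) (smt (verit) ext_density_nonneg ext_density_le_1)
  finally have "\<bar>(\<Sum>b\<in>UNIV. \<Sum>m<n. ?e m b) - (\<Sum>b\<in>UNIV. \<Sum>m<n. ?e (Suc m) b)\<bar> / ?q / real n
      \<le> ?q / ?q / real n"
    by (intro divide_right_mono) simp_all
  then show ?thesis
    unfolding mean_x mean_children by (simp add: diff_divide_distrib[symmetric] abs_divide)
qed

lemma mu_upto_eq_sum_ext_density:
  fixes S :: "'a::finite list set"
  assumes "S \<subseteq> free_semigroup"
  shows "mu_upto S n = (\<Sum>m<n. ext_density S (Suc m) [])"
proof -
  let ?A = "{w \<in> S \<inter> free_semigroup. length w \<le> n}" and ?weight = "\<lambda>w. (1 / real CARD('a)) ^ length w"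
  have "finite ?A"
    by (rule finite_subset[OF _ finite_lists_length_le[of "UNIV::'a set" n]]) auto
  moreover have "length ` ?A \<subseteq> {1..n}"
    by (auto simp: free_semigroup_def Suc_le_eq)
  ultimately have "mu_upto S n = (\<Sum>l\<in>{1..n}. \<Sum>w\<in>{w \<in> ?A. length w = l}. ?weight w)"
    unfolding mu_upto_def by (intro sum.group[symmetric]) auto
  also have "\<dots> = (\<Sum>l\<in>{1..n}. ext_density S l [])"
  proof (rule sum.cong[OF refl])
    fix l assume "l \<in> {1..n}"
    then have "{w \<in> ?A. length w = l} = {v. length v = l \<and> [] @ v \<in> S}"
      using assms by (auto simp: free_semigroup_def)
    then show "(\<Sum>w\<in>{w \<in> ?A. length w = l}. ?weight w) = ext_density S l []"
      by (simp add: ext_density_def ext_card_def power_divide)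
  qed
  finally show ?thesis
    by (simp add: sum.atLeast1_atMost_eq)
qed

lemma mu_upto_free_semigroup: "mu_upto (free_semigroup :: 'a::finite list set) n = real n"
proof -
  have "ext_density (free_semigroup :: 'a list set) (Suc m) [] = 1" for m
  proof -
    have "{v::'a list. length v = Suc m \<and> [] @ v \<in> free_semigroup} = {v. length v = Suc m}"
      by (auto simp: free_semigroup_def)
    then show ?thesis
      unfolding ext_density_def ext_card_def by (simp add: card_words_length)
  qed
  then show ?thesis
    by (simp add: mu_upto_eq_sum_ext_density)
qed

lemma upper_density_eq_limsup_mean_ext_density:
  fixes S :: "'a::finite list set"
  assumes "S \<subseteq> free_semigroup"
  shows "upper_density S = limsup (\<lambda>n. ereal (mean_ext_density S n []))"
  unfolding upper_density_def mu_upto_free_semigroup mu_upto_eq_sum_ext_density[OF assms]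
    mean_ext_density_def ..

lemma strongly_product_free_suffix_chain:
  assumes spf: "strongly_product_free k S" and len: "length cs < k" and cs: "set cs \<subseteq> S"
    and ij: "i < j" "j \<le> length cs" and w: "concat (drop j cs) @ w \<in> S"
  shows "concat (drop i cs) @ w \<notin> S"
proof
  assume i: "concat (drop i cs) @ w \<in> S"
  define xs where "xs = take (j - i) (drop i cs) @ [concat (drop j cs) @ w]"
  have "concat (drop i cs) = concat (take (j - i) (drop i cs)) @ concat (drop j cs)"
    using ij by (metis append_take_drop_id concat_append drop_drop le_add_diff_inverse2 less_imp_le)
  then have "concat xs = concat (drop i cs) @ w"
    by (simp add: xs_def)
  moreover have "length xs = j - i + 1" and "set xs \<subseteq> S"
    using ij cs w by (auto simp: xs_def dest: in_set_takeD in_set_dropD)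
  moreover have "product_free (j - i + 1) S"
  proof -
    have "2 \<le> j - i + 1" "j - i + 1 \<le> k"
      using ij len by auto
    then show ?thesis
      using spf unfolding strongly_product_free_def by blast
  qed
  ultimately show False
    using i unfolding product_free_def by blast
qed

lemma sum_ext_card_suffix_chain_le:
  fixes S :: "'a::finite list set"
  assumes "strongly_product_free k S" "length cs < k" "set cs \<subseteq> S"
  shows "(\<Sum>j\<le>length cs. ext_card S m (concat (drop j cs) @ z)) \<le> CARD('a) ^ m"
proof -
  define V where "V j = {v::'a list. length v = m \<and> (concat (drop j cs) @ z) @ v \<in> S}" for j
  have "finite (V j)" for j
    unfolding V_def by (rule finite_subset[OF _ finite_words_length[of m]]) auto
  moreover have "V i \<inter> V j = {}" if "i \<le> length cs" "j \<le> length cs" "i \<noteq> j" for i j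
    using that strongly_product_free_suffix_chain[OF assms, of i j] strongly_product_free_suffix_chain[OF assms, of j i]
    by (cases "i < j") (auto simp: V_def)
  ultimately have "(\<Sum>j\<le>length cs. ext_card S m (concat (drop j cs) @ z)) = card (\<Union>j\<le>length cs. V j)"
    unfolding ext_card_def V_def[symmetric] by (intro card_UN_disjoint[symmetric]) auto
  also have "\<dots> \<le> card {v::'a list. length v = m}"
    by (rule card_mono[OF finite_words_length]) (auto simp: V_def)
  finally show ?thesis
    by (simp add: card_words_length)
qed

lemma sum_mean_ext_density_suffix_chain_le_1:
  fixes S :: "'a::finite list set"
  assumes "strongly_product_free k S" "length cs < k" "set cs \<subseteq> S"
  shows "(\<Sum>j\<le>length cs. mean_ext_density S n (concat (drop j cs) @ z)) \<le> 1"
proof -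
  have "(\<Sum>j\<le>length cs. ext_density S m (concat (drop j cs) @ z)) \<le> 1" for m
    using sum_ext_card_suffix_chain_le[OF assms, of m z]
    by (simp add: ext_density_def sum_divide_distrib[symmetric] divide_le_eq_1 flip: of_nat_sum of_nat_power)
  then have "(\<Sum>m<n. \<Sum>j\<le>length cs. ext_density S (Suc m) (concat (drop j cs) @ z)) \<le> (\<Sum>m<n. 1)"
    by (intro sum_mono)
  then show ?thesis
    unfolding mean_ext_density_def
    by (cases "n = 0") (simp_all add: sum_divide_distrib[symmetric] sum.swap[of _ "{..<n}"] divide_le_eq_1)
qed

locale bounded_harmonic =
  fixes D :: "'a::finite list \<Rightarrow> real"
  assumes harmonic: "\<And>x. child_mean D x = D x"
    and bdd_above_range: "bdd_above (range D)"
begin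

definition supD :: real where
  "supD = (SUP x. D x)"

lemma D_le_supD: "D x \<le> supD"
  unfolding supD_def by (rule cSUP_upper[OF UNIV_I bdd_above_range])

lemma exists_near_supD:
  assumes "0 < e"
  obtains z where "supD - D z < e"
proof -
  have "supD - e < (SUP x. D x)"
    using assms by (simp add: supD_def)
  then obtain z where "supD - e < D z"
    by (auto simp: less_cSUP_iff[OF _ bdd_above_range])
  then show ?thesis
    using that[of z] by simp
qed

lemma sum_D_snoc: "(\<Sum>b\<in>UNIV. D (x @ [b])) = real CARD('a) * D x"
proof -
  have "real CARD('a) * D x = (\<Sum>b\<in>UNIV. D (x @ [b]))"
    using harmonic[of x] by (simp add: child_mean_def field_simps)
  then show ?thesis ..
qed

lemma supD_diff_snoc_le: "supD - D (x @ [b]) \<le> real CARD('a) * (supD - D x)"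
proof -
  have "real CARD('a) * D x = (\<Sum>b'\<in>UNIV. D (x @ [b']))"
    by (rule sum_D_snoc[symmetric])
  also have "\<dots> = D (x @ [b]) + (\<Sum>b'\<in>UNIV - {b}. D (x @ [b']))"
    by (simp add: sum.remove)
  also have "(\<Sum>b'\<in>UNIV - {b}. D (x @ [b'])) \<le> (real CARD('a) - 1) * supD"
    using sum_bounded_above[of "UNIV - {b}" "\<lambda>b'. D (x @ [b'])" supD] D_le_supD
    by (simp add: card_Diff_singleton of_nat_diff)
  finally show ?thesis
    by (simp add: algebra_simps)
qed

lemma supD_diff_append_le: "supD - D (x @ w) \<le> real CARD('a) ^ length w * (supD - D x)"
proof (induction w arbitrary: x)
  case Nil
  then show ?case by simp
next
  case (Cons b w)
  have "supD - D ((x @ [b]) @ w) \<le> real CARD('a) ^ length w * (supD - D (x @ [b]))"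
    by (rule Cons.IH)
  also have "\<dots> \<le> real CARD('a) ^ length w * (real CARD('a) * (supD - D x))"
    by (rule mult_left_mono[OF supD_diff_snoc_le]) simp
  finally show ?case
    by (simp add: algebra_simps)
qed

lemma sum_D_append_words: "(\<Sum>v | length v = m. D (x @ v)) = real CARD('a) ^ m * D x"
proof (induction m arbitrary: x)
  case 0
  then show ?case by simp
next
  case (Suc m)
  have "{v::'a list. length v = Suc m} = (\<lambda>(b, v). b # v) ` (UNIV \<times> {v. length v = m})"
    by (auto simp: length_Suc_conv)
  moreover have "inj (\<lambda>(b::'a, v). b # v)"
    by (auto simp: inj_def)
  ultimately have "(\<Sum>v | length v = Suc m. D (x @ v)) = (\<Sum>(b, v)\<in>UNIV \<times> {v. length v = m}. D ((x @ [b]) @ v))"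
    by (simp add: sum.reindex inj_on_subset split_def)
  also have "\<dots> = (\<Sum>b\<in>UNIV. \<Sum>v | length v = m. D ((x @ [b]) @ v))"
    by (rule sum.cartesian_product[symmetric])
  also have "\<dots> = real CARD('a) ^ m * (\<Sum>b\<in>UNIV. D (x @ [b]))"
    by (simp only: Suc.IH sum_distrib_left)
  also have "(\<Sum>b\<in>UNIV. D (x @ [b])) = real CARD('a) * D x"
    by (rule sum_D_snoc)
  finally show ?case
    by simp
qed

lemma card_low_extensions_le:
  "real (card {v. length v = m \<and> D (x @ v) < supD - \<tau>}) * \<tau> \<le> real CARD('a) ^ m * (supD - D x)"
proof -
  let ?W = "{v::'a list. length v = m}" and ?B = "{v. length v = m \<and> D (x @ v) < supD - \<tau>}"
  have "real (card ?B) * \<tau> = (\<Sum>v\<in>?B. \<tau>)"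
    by simp
  also have "\<dots> \<le> (\<Sum>v\<in>?B. supD - D (x @ v))"
    by (rule sum_mono) auto
  also have "\<dots> \<le> (\<Sum>v\<in>?W. supD - D (x @ v))"
    by (rule sum_mono2[OF finite_words_length]) (auto simp: D_le_supD)
  also have "\<dots> = real CARD('a) ^ m * (supD - D x)"
    by (simp add: sum_subtractf sum_D_append_words card_words_length algebra_simps)
  finally show ?thesis .
qed

end

locale product_free_limit = bounded_harmonic D for D :: "'a::finite list \<Rightarrow> real" +
  fixes S :: "'a list set" and k :: nat
  assumes approx_by_ext_density: "\<And>x \<eta>. 0 < \<eta> \<Longrightarrow> \<exists>m. D x - \<eta> < ext_density S m x"
    and suffix_chain_sum_le_1:
      "\<And>cs z. length cs < k \<Longrightarrow> set cs \<subseteq> S \<Longrightarrow> (\<Sum>j\<le>length cs. D (concat (drop j cs) @ z)) \<le> 1"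
begin

lemma exists_in_S_near_supD:
  assumes "0 < supD" "0 < \<tau>"
  obtains c where "c \<in> S" "supD - D c \<le> \<tau>"
proof -
  define \<eta> where "\<eta> = min (supD / 4) (\<tau> * supD / 2)"
  have "0 < \<eta>"
    using assms by (simp add: \<eta>_def)
  have \<eta>_small: "\<eta> / \<tau> \<le> supD - 2 * \<eta>"
  proof -
    have "\<eta> / \<tau> \<le> supD / 2"
      using assms by (simp add: \<eta>_def divide_le_eq mult.commute)
    moreover have "\<eta> \<le> supD / 4"
      by (simp add: \<eta>_def)
    ultimately show ?thesis
      by linarith
  qed
  (* Near a word x with D x close to supD, a proportion of more than supD - 2 \<eta> of the
     extensions of length m lie in S, but by Markov at most \<eta> / \<tau> of them have D below supD - \<tau>. *)
  obtain x where x: "supD - D x < \<eta>"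
    using exists_near_supD[OF \<open>0 < \<eta>\<close>] .
  obtain m where m: "D x - \<eta> < ext_density S m x"
    using approx_by_ext_density[OF \<open>0 < \<eta>\<close>] ..
  let ?Q = "real CARD('a) ^ m"
  let ?G = "{v. length v = m \<and> x @ v \<in> S}" and ?B = "{v. length v = m \<and> D (x @ v) < supD - \<tau>}"
  have "real (card ?B) * \<tau> \<le> ?Q * (supD - D x)"
    by (rule card_low_extensions_le)
  also have "\<dots> < ?Q * \<eta>"
    using x by simp
  finally have "real (card ?B) < ?Q * (\<eta> / \<tau>)"
    using assms by (simp add: pos_less_divide_eq)
  also have "\<dots> \<le> ?Q * (supD - 2 * \<eta>)"
    using \<eta>_small by (intro mult_left_mono) simp_all
  also have "\<dots> < ?Q * (D x - \<eta>)"
    using x by simp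
  also have "\<dots> < real (card ?G)"
    using m by (simp add: ext_density_def ext_card_def pos_less_divide_eq mult.commute)
  finally have "\<not> ?G \<subseteq> ?B"
    using card_mono[OF finite_subset[OF _ finite_words_length[of m]], of ?B ?G] by auto
  then obtain v where "x @ v \<in> S" "\<not> D (x @ v) < supD - \<tau>"
    by blast
  then show ?thesis
    using that[of "x @ v"] by simp
qed

lemma exists_suffix_chain_near_supD:
  assumes "0 < supD" "0 < \<epsilon>" "supD - D z \<le> \<epsilon>"
  shows "\<exists>cs. length cs = t \<and> set cs \<subseteq> S \<and> (\<forall>j\<le>t. supD - D (concat (drop j cs) @ z) \<le> \<epsilon>)"
  using assms(3)
proof (induction t arbitrary: z)
  case 0
  then show ?case by simp
next
  case (Suc t)
  let ?Q = "real CARD('a) ^ length z"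
  obtain c where c: "c \<in> S" "supD - D c \<le> \<epsilon> / ?Q"
    using exists_in_S_near_supD[OF assms(1), of "\<epsilon> / ?Q"] assms(2) by auto
  have "supD - D (c @ z) \<le> ?Q * (supD - D c)"
    by (rule supD_diff_append_le)
  also have "\<dots> \<le> \<epsilon>"
    using c(2) by (simp add: pos_le_divide_eq mult.commute)
  finally obtain cs where cs: "length cs = t" "set cs \<subseteq> S"
      "\<forall>j\<le>t. supD - D (concat (drop j cs) @ c @ z) \<le> \<epsilon>"
    using Suc.IH by blast
  have "supD - D (concat (drop j (cs @ [c])) @ z) \<le> \<epsilon>" if "j \<le> Suc t" for j
    using cs(1,3) Suc.prems that by (cases "j \<le> t") auto
  then show ?case
    using cs c(1) by (intro exI[of _ "cs @ [c]"]) auto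
qed

lemma supD_le_inverse:
  assumes "0 < k"
  shows "supD \<le> 1 / real k"
proof (rule field_le_epsilon)
  fix e :: real
  assume "0 < e"
  show "supD \<le> 1 / real k + e"
  proof (cases "0 < supD")
    case False
    moreover have "0 < 1 / real k"
      using assms by simp
    ultimately show ?thesis
      using \<open>0 < e\<close> by linarith
  next
    case True
    obtain z where "supD - D z < e"
      using exists_near_supD[OF \<open>0 < e\<close>] .
    then obtain cs where cs: "length cs = k - 1" "set cs \<subseteq> S"
        "\<forall>j\<le>k - 1. supD - D (concat (drop j cs) @ z) \<le> e"
      using exists_suffix_chain_near_supD[OF True \<open>0 < e\<close>, of z "k - 1"] by auto
    have "real k * (supD - e) = (\<Sum>j\<le>k - 1. supD - e)"
      using assms by simp
    also have "\<dots> \<le> (\<Sum>j\<le>length cs. D (concat (drop j cs) @ z))"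
      unfolding cs(1) using cs(3) by (intro sum_mono) auto
    also have "\<dots> \<le> 1"
      using suffix_chain_sum_le_1[OF _ cs(2)] cs(1) assms by simp
    finally show ?thesis
      using assms by (simp add: field_simps)
  qed
qed

end

lemma diagonal_subseq_convergent:
  fixes f :: "'i::countable \<Rightarrow> nat \<Rightarrow> 'a::heine_borel"
  assumes "\<And>x. bounded (range (f x))"
  obtains d where "strict_mono d" "\<And>x. convergent (\<lambda>n. f x (d n))"
proof -
  define P where "P n s \<longleftrightarrow> convergent (f (from_nat n) \<circ> s)" for n and s :: "nat \<Rightarrow> nat"
  interpret subseqs P
  proof
    fix n and s :: "nat \<Rightarrow> nat"
    have "bounded (range (f (from_nat n) \<circ> s))"
      using assms by (rule bounded_subset) auto
    then show "\<exists>r'. strict_mono r' \<and> P n (s \<circ> r')"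
      using bounded_imp_convergent_subsequence by (fastforce simp: P_def convergent_def o_assoc)
  qed
  have "convergent (\<lambda>n. f x (diagseq n))" for x
  proof -
    have "P (to_nat x) (diagseq \<circ> (+) (Suc (to_nat x)))"
      by (rule diagseq_holds) (auto simp: P_def o_assoc intro: convergent_subseq_convergent)
    then have "convergent (\<lambda>n. f x (diagseq (n + Suc (to_nat x))))"
      by (simp add: P_def o_def add.commute)
    then show ?thesis
      by (rule convergent_ignore_initial_segment[THEN iffD1])
  qed
  then show ?thesis
    using that subseq_diagseq by blast
qed

context
  fixes S :: "'a::finite list set" and r :: "nat \<Rightarrow> nat" and D :: "'a list \<Rightarrow> real"
  assumes r_at_top: "filterlim r at_top sequentially"
    and tendsto_D: "\<And>x. (\<lambda>i. mean_ext_density S (r i) x) \<longlonglongrightarrow> D x"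
begin

lemma mean_ext_density_limit_le_1: "D x \<le> 1"
  using tendsto_D by (rule LIMSEQ_le_const2) (simp add: mean_ext_density_le_1)

lemma mean_ext_density_limit_harmonic: "child_mean D x = D x"
proof -
  have "(\<lambda>i. 1 / real (r i)) \<longlonglongrightarrow> 0"
    using filterlim_compose[OF filterlim_real_sequentially r_at_top]
    by (intro tendsto_divide_0[OF tendsto_const] filterlim_at_top_imp_at_infinity)
  then have "(\<lambda>i. mean_ext_density S (r i) x - child_mean (mean_ext_density S (r i)) x) \<longlonglongrightarrow> 0"
    by (rule Lim_null_comparison[rotated]) (simp add: mean_ext_density_almost_harmonic)
  moreover have "(\<lambda>i. mean_ext_density S (r i) x - child_mean (mean_ext_density S (r i)) x)
      \<longlonglongrightarrow> D x - child_mean D x"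
    unfolding child_mean_def by (intro tendsto_intros tendsto_D) simp
  ultimately show ?thesis
    using LIMSEQ_unique by fastforce
qed

lemma mean_ext_density_limit_approx:
  assumes "0 < \<eta>"
  shows "\<exists>m. D x - \<eta> < ext_density S m x"
proof -
  have "\<forall>\<^sub>F i in sequentially. D x - \<eta> < mean_ext_density S (r i) x"
    using assms by (intro order_tendstoD(1)[OF tendsto_D]) simp
  moreover have "\<forall>\<^sub>F i in sequentially. 1 \<le> r i"
    using r_at_top by (simp add: filterlim_at_top)
  ultimately obtain n where n: "D x - \<eta> < mean_ext_density S n x" "0 < n"
    by (auto dest: eventually_happens[OF eventually_conj])
  show ?thesis
  proof (rule ccontr)
    assume "\<nexists>m. D x - \<eta> < ext_density S m x"
    then have "(\<Sum>m<n. ext_density S (Suc m) x) \<le> (\<Sum>m<n. D x - \<eta>)"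
      by (intro sum_mono) (simp add: not_less)
    then show False
      using n by (simp add: mean_ext_density_def less_divide_eq mult.commute)
  qed
qed

lemma product_free_limit_mean_ext_density:
  assumes "strongly_product_free k S"
  shows "product_free_limit D S k"
proof
  show "child_mean D x = D x" for x
    by (rule mean_ext_density_limit_harmonic)
  show "bdd_above (range D)"
    using mean_ext_density_limit_le_1 by (auto intro!: bdd_aboveI[where M = 1])
  show "\<exists>m. D x - \<eta> < ext_density S m x" if "0 < \<eta>" for x \<eta>
    using that by (rule mean_ext_density_limit_approx)
  show "(\<Sum>j\<le>length cs. D (concat (drop j cs) @ z)) \<le> 1" if "length cs < k" "set cs \<subseteq> S" for cs z
    by (intro LIMSEQ_le_const2[OF tendsto_sum[OF tendsto_D]] exI allI impI
        sum_mean_ext_density_suffix_chain_le_1[OF assms that])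
qed

end

theorem theorem1p3:
  fixes S :: "'a::finite list set" and k :: nat
  assumes "k \<ge> 2"
    and "S \<subseteq> free_semigroup"
    and "strongly_product_free k S"
  shows "upper_density S \<le> ereal (1 / real k)"
proof -
  let ?u = "\<lambda>n. ereal (mean_ext_density S n [])"
  obtain r0 where r0: "strict_mono r0" "(?u \<circ> r0) \<longlonglongrightarrow> limsup ?u"
    using limsup_subseq_lim by blast
  have "bounded (range (\<lambda>n. mean_ext_density S (r0 n) x))" for x
    by (intro boundedI[where B = 1]) (auto simp: abs_of_nonneg mean_ext_density_nonneg mean_ext_density_le_1)
  then obtain d where d: "strict_mono d" "\<And>x. convergent (\<lambda>n. mean_ext_density S (r0 (d n)) x)"
    using diagonal_subseq_convergent[of "\<lambda>x n. mean_ext_density S (r0 n) x"] by blast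
  define D where "D x = lim (\<lambda>n. mean_ext_density S (r0 (d n)) x)" for x
  have tendsto_D: "(\<lambda>n. mean_ext_density S (r0 (d n)) x) \<longlonglongrightarrow> D x" for x
    using d(2) by (simp add: D_def convergent_LIMSEQ_iff)
  interpret product_free_limit D S k
    using product_free_limit_mean_ext_density[OF _ tendsto_D assms(3)]
      strict_mono_o[OF r0(1) d(1)] by (simp add: filterlim_subseq o_def)
  have "(\<lambda>n. ereal (mean_ext_density S (r0 (d n)) [])) \<longlonglongrightarrow> limsup ?u"
    using LIMSEQ_subseq_LIMSEQ[OF r0(2) d(1)] by (simp add: o_def)
  then have "limsup ?u = ereal (D [])"
    using tendsto_ereal[OF tendsto_D] LIMSEQ_unique by blast
  also have "\<dots> \<le> ereal (1 / real k)"
    using order_trans[OF D_le_supD supD_le_inverse] assms(1) by simp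
  finally show ?thesis
    using upper_density_eq_limsup_mean_ext_density[OF assms(2)] by simp
qed

end
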